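(* Let $\mathscr{R}_1, \mathscr{R}_2$ be von Neumann algebras acting on a Hilbert space $\mathscr{H}$, and let $\mathcal{S}$ be a family of operators in $\mathscr{R}_1\cap\mathscr{R}_2$. Then $\langle\mathscr{R}_1\mathcal{S}\rangle\cap\mathscr{R}_2 = \langle(\mathscr{R}_1\cap\mathscr{R}_2)\mathcal{S}\rangle$.
   Context: For a von Neumann algebra $\mathscr{R}$ and a family $\mathcal{S}$ of operators in $\mathscr{R}$, $\langle\mathscr{R}\mathcal{S}\rangle$ denotes the smallest left ideal of $\mathscr{R}$ containing $\mathcal{S}$ (generation in the purely algebraic sense; no closure is taken). Note $\mathscr{R}_1\cap\mathscr{R}_2$ is itself a von Neumann algebra. *)

theory Defs
  imports "HOL-Analysis.Analysis"
begin

text \<open>A complex Hilbert space is modelled as a real Banach space (type class banach)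
  together with a complex scalar multiplication sc extending the real one and a
  complex inner product ip (linear in the first argument, as in Kadison--Ringrose)
  inducing the norm.\<close>

definition hilbert_space :: "(complex \<Rightarrow> 'a::banach \<Rightarrow> 'a) \<Rightarrow> ('a \<Rightarrow> 'a \<Rightarrow> complex) \<Rightarrow> bool" where
  "hilbert_space sc ip \<longleftrightarrow>
     (\<forall>r x. sc (complex_of_real r) x = r *\<^sub>R x) \<and>
     (\<forall>a b x. sc (a * b) x = sc a (sc b x)) \<and>
     (\<forall>a b x. sc (a + b) x = sc a x + sc b x) \<and>
     (\<forall>a x y. sc a (x + y) = sc a x + sc a y) \<and>
     (\<forall>x y z. ip (x + y) z = ip x z + ip y z) \<and>
     (\<forall>a x y. ip (sc a x) y = a * ip x y) \<and>
     (\<forall>x y. ip y x = cnj (ip x y)) \<and>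
     (\<forall>x. norm x = sqrt (Re (ip x x)))"

definition bop :: "(complex \<Rightarrow> 'a::banach \<Rightarrow> 'a) \<Rightarrow> ('a \<Rightarrow> 'a) \<Rightarrow> bool" where
  "bop sc T \<longleftrightarrow> bounded_linear T \<and> (\<forall>c x. T (sc c x) = sc c (T x))"

definition is_adjoint :: "('a \<Rightarrow> 'a \<Rightarrow> complex) \<Rightarrow> ('a \<Rightarrow> 'a) \<Rightarrow> ('a \<Rightarrow> 'a) \<Rightarrow> bool" where
  "is_adjoint ip T S \<longleftrightarrow> (\<forall>x y. ip (T x) y = ip x (S y))"

definition wot_closed :: "(complex \<Rightarrow> 'a::banach \<Rightarrow> 'a) \<Rightarrow> ('a \<Rightarrow> 'a \<Rightarrow> complex) \<Rightarrow> ('a \<Rightarrow> 'a) set \<Rightarrow> bool" where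
  "wot_closed sc ip M \<longleftrightarrow>
     (\<forall>T. bop sc T \<and>
          (\<forall>F :: ('a \<times> 'a) set. finite F \<longrightarrow>
             (\<forall>e>0. \<exists>A\<in>M. \<forall>(x, y)\<in>F. cmod (ip (T x) y - ip (A x) y) < e))
        \<longrightarrow> T \<in> M)"

definition von_neumann_algebra :: "(complex \<Rightarrow> 'a::banach \<Rightarrow> 'a) \<Rightarrow> ('a \<Rightarrow> 'a \<Rightarrow> complex) \<Rightarrow> ('a \<Rightarrow> 'a) set \<Rightarrow> bool" where
  "von_neumann_algebra sc ip M \<longleftrightarrow>
     (\<forall>T\<in>M. bop sc T) \<and>
     id \<in> M \<and>
     (\<forall>A\<in>M. \<forall>B\<in>M. (\<lambda>x. A x + B x) \<in> M) \<and>
     (\<forall>A\<in>M. \<forall>c. (\<lambda>x. sc c (A x)) \<in> M) \<and>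
     (\<forall>A\<in>M. \<forall>B\<in>M. A \<circ> B \<in> M) \<and>
     (\<forall>A\<in>M. \<exists>B\<in>M. is_adjoint ip A B) \<and>
     wot_closed sc ip M"

definition left_ideal :: "('a::banach \<Rightarrow> 'a) set \<Rightarrow> ('a \<Rightarrow> 'a) set \<Rightarrow> bool" where
  "left_ideal R J \<longleftrightarrow>
     J \<subseteq> R \<and> (\<lambda>x. 0) \<in> J \<and>
     (\<forall>A\<in>J. \<forall>B\<in>J. (\<lambda>x. A x + B x) \<in> J) \<and>
     (\<forall>A\<in>J. (\<lambda>x. - A x) \<in> J) \<and>
     (\<forall>A\<in>R. \<forall>B\<in>J. A \<circ> B \<in> J)"

text \<open>The smallest left ideal of R containing S (no closure taken).\<close>
definition gen_left_ideal :: "('a::banach \<Rightarrow> 'a) set \<Rightarrow> ('a \<Rightarrow> 'a) set \<Rightarrow> ('a \<Rightarrow> 'a) set" where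
  "gen_left_ideal R S = \<Inter>{J. left_ideal R J \<and> S \<subseteq> J}"

end

theory Submission
  imports Defs
begin

text \<open>Write \<open>T = \<Sum>\<^sub>i A\<^sub>i s\<^sub>i\<close> with \<open>A\<^sub>i \<in> R\<^sub>1\<close>, \<open>s\<^sub>i \<in> S\<close>, and suppose \<open>T \<in> R\<^sub>2\<close>; put \<open>M = R\<^sub>1 \<inter> R\<^sub>2\<close>.
  With \<open>P = \<Sum>\<^sub>i s\<^sub>i\<^sup>* s\<^sub>i \<in> M\<close> and \<open>D\<^sub>k = (P + 1/(k+1))\<^sup>-\<^sup>1 \<in> M\<close> (a Neumann series), the operators
  \<open>T D\<^sub>k s\<^sub>i\<^sup>*\<close> lie in \<open>M\<close>. Because \<open>\<parallel>T x\<parallel>\<^sup>2 \<le> K \<Sum>\<^sub>i \<parallel>s\<^sub>i x\<parallel>\<^sup>2\<close>, the monotone bounded sequence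
  \<open>\<langle>D\<^sub>k w, w\<rangle>\<close> controls the increments of \<open>T D\<^sub>k w\<close>, so \<open>T D\<^sub>k s\<^sub>i\<^sup>*\<close> converges strongly and
  boundedly to some \<open>B\<^sub>i\<close>, which lies in \<open>M\<close> by weak-operator closedness. Finally
  \<open>\<Sum>\<^sub>i T D\<^sub>k s\<^sub>i\<^sup>* s\<^sub>i = T D\<^sub>k P = T - (1/(k+1)) T D\<^sub>k \<rightarrow> T\<close>, so \<open>T = \<Sum>\<^sub>i B\<^sub>i s\<^sub>i\<close> with all \<open>B\<^sub>i \<in> M\<close>.\<close>

section \<open>Inner products\<close>

locale hilbert =
  fixes sc :: "complex \<Rightarrow> 'a::banach \<Rightarrow> 'a" and ip :: "'a \<Rightarrow> 'a \<Rightarrow> complex"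
  assumes hilbert_space: "hilbert_space sc ip"
begin

lemma sc_of_real: "sc (complex_of_real r) x = r *\<^sub>R x"
  using hilbert_space unfolding hilbert_space_def by blast
lemma sc_mult: "sc (a * b) x = sc a (sc b x)"
  using hilbert_space unfolding hilbert_space_def by blast
lemma sc_add_right: "sc a (x + y) = sc a x + sc a y"
  using hilbert_space unfolding hilbert_space_def by blast
lemma ip_add_left: "ip (x + y) z = ip x z + ip y z"
  using hilbert_space unfolding hilbert_space_def by blast
lemma ip_sc_left: "ip (sc a x) y = a * ip x y"
  using hilbert_space unfolding hilbert_space_def by blast
lemma ip_sym: "ip y x = cnj (ip x y)"
  using hilbert_space unfolding hilbert_space_def by blast
lemma norm_eq_sqrt_ip: "norm x = sqrt (Re (ip x x))"
  using hilbert_space unfolding hilbert_space_def by blast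

lemma sc_scaleR: "sc a (r *\<^sub>R x) = r *\<^sub>R sc a x"
  by (metis sc_of_real sc_mult mult.commute)

lemma ip_scaleR_left: "ip (r *\<^sub>R x) y = complex_of_real r * ip x y"
  using ip_sc_left[of "complex_of_real r" x y] by (simp add: sc_of_real)
lemma ip_zero_left [simp]: "ip 0 y = 0"
  using ip_scaleR_left[of 0 0 y] by simp
lemma ip_diff_left: "ip (x - y) z = ip x z - ip y z"
  using ip_add_left[of x "-y" z] ip_scaleR_left[of "-1" y z] by simp
lemma ip_add_right: "ip x (y + z) = ip x y + ip x z"
  by (metis ip_sym ip_add_left complex_cnj_add)
lemma ip_sc_right: "ip x (sc a y) = cnj a * ip x y"
  by (metis ip_sym ip_sc_left complex_cnj_mult)
lemma ip_scaleR_right: "ip x (r *\<^sub>R y) = complex_of_real r * ip x y"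
  using ip_sc_right[of x "complex_of_real r" y] by (simp add: sc_of_real)
lemma ip_zero_right [simp]: "ip x 0 = 0"
  using ip_scaleR_right[of x 0 0] by simp
lemma ip_diff_right: "ip x (y - z) = ip x y - ip x z"
  by (metis ip_sym ip_diff_left complex_cnj_diff)
lemma ip_sum_left: "ip (\<Sum>i\<in>I. f i) y = (\<Sum>i\<in>I. ip (f i) y)"
  by (induction I rule: infinite_finite_induct) (auto simp: ip_add_left)

lemma ip_self: "ip x x = complex_of_real ((norm x)\<^sup>2)"
proof -
  have "Im (ip x x) = 0" using arg_cong[OF ip_sym[of x x], of Im] by simp
  moreover have "0 \<le> Re (ip x x)"
    using norm_eq_sqrt_ip[of x] norm_ge_zero[of x] real_sqrt_ge_0_iff by metis
  ultimately show ?thesis using norm_eq_sqrt_ip[of x] by (simp add: complex_eq_iff)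
qed

lemma re_ip_self: "Re (ip x x) = (norm x)\<^sup>2"
  by (simp add: ip_self)

lemma re_ip_commute: "Re (ip x y) = Re (ip y x)"
  by (subst ip_sym) simp

lemma cauchy_schwarz: "cmod (ip x y) \<le> norm x * norm y"
proof (cases "y = 0")
  case True
  then show ?thesis by simp
next
  case False
  then have ny2: "(norm y)\<^sup>2 > 0" by simp
  define a where "a = ip x y"
  define t where "t = 1 / (norm y)\<^sup>2"
  define b where "b = complex_of_real t * a"
  have aa: "a * cnj a = complex_of_real ((cmod a)\<^sup>2)" by (simp only: complex_norm_square)
  have "ip (x - sc b y) (x - sc b y) = ip x x - ip (sc b y) x - (ip x (sc b y) - ip (sc b y) (sc b y))"
    by (simp only: ip_diff_left ip_diff_right)
  also have "\<dots> = ip x x - b * cnj a - (cnj b * a - cnj b * (b * ip y y))"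
    by (simp only: ip_sc_left ip_sc_right ip_sym[of y x] a_def)
  also have "\<dots> = ip x x - 2 * complex_of_real t * (a * cnj a)
      + (complex_of_real t)\<^sup>2 * (a * cnj a) * ip y y"
    unfolding b_def by (simp add: algebra_simps power2_eq_square)
  also have "\<dots> = complex_of_real ((norm x)\<^sup>2 - 2 * t * (cmod a)\<^sup>2 + t\<^sup>2 * (cmod a)\<^sup>2 * (norm y)\<^sup>2)"
    unfolding aa ip_self by simp
  finally have "0 \<le> (norm x)\<^sup>2 - 2 * t * (cmod a)\<^sup>2 + t\<^sup>2 * (cmod a)\<^sup>2 * (norm y)\<^sup>2"
    using re_ip_self[of "x - sc b y"] by (metis Re_complex_of_real zero_le_power2)
  moreover have "t\<^sup>2 * (cmod a)\<^sup>2 * (norm y)\<^sup>2 = t * (cmod a)\<^sup>2"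
    using ny2 by (simp add: t_def power2_eq_square)
  ultimately have "(cmod a)\<^sup>2 / (norm y)\<^sup>2 \<le> (norm x)\<^sup>2" by (simp add: t_def)
  then have "(cmod a)\<^sup>2 \<le> (norm x * norm y)\<^sup>2"
    using ny2 by (simp add: divide_le_eq power_mult_distrib)
  then show ?thesis unfolding a_def by (rule power2_le_imp_le) simp
qed

lemma ip_eqI: assumes "\<And>z. ip x z = ip y z" shows "x = y"
proof -
  have "ip (x - y) (x - y) = 0" using assms by (simp add: ip_diff_left)
  then show ?thesis by (simp add: ip_self)
qed

lemma norm_sc: "norm (sc c x) = cmod c * norm x"
proof -
  have "complex_of_real ((norm (sc c x))\<^sup>2) = ip (sc c x) (sc c x)" by (simp add: ip_self)
  also have "\<dots> = (c * cnj c) * ip x x" by (simp add: ip_sc_left ip_sc_right mult.commute)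
  also have "\<dots> = complex_of_real ((cmod c * norm x)\<^sup>2)"
    by (simp only: ip_self complex_norm_square of_real_mult power_mult_distrib)
  finally have "(norm (sc c x))\<^sup>2 = (cmod c * norm x)\<^sup>2" using of_real_eq_iff by blast
  then show ?thesis by (simp add: power2_eq_iff_nonneg)
qed

lemma bounded_linear_sc: "bounded_linear (sc c)"
  by (rule bounded_linear_intro[of _ "cmod c"]) (auto simp: sc_add_right sc_scaleR norm_sc)

lemma bounded_linear_ip_left: "bounded_linear (\<lambda>v. ip v y)"
proof (rule bounded_linear_intro[of _ "norm y"])
  show "ip (r *\<^sub>R v) y = r *\<^sub>R ip v y" for r v by (simp add: ip_scaleR_left scaleR_conv_of_real)
  show "norm (ip v y) \<le> norm v * norm y" for v using cauchy_schwarz by simp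
qed (rule ip_add_left)

lemma norm_add_scaleR_square:
  "(norm (a + s *\<^sub>R b))\<^sup>2 = (norm a)\<^sup>2 + 2 * s * Re (ip a b) + s\<^sup>2 * (norm b)\<^sup>2"
proof -
  have "ip (a + s *\<^sub>R b) (a + s *\<^sub>R b) = ip a a + complex_of_real s * ip a b
      + complex_of_real s * ip b a + complex_of_real s * (complex_of_real s * ip b b)"
    by (simp add: ip_add_left ip_add_right ip_scaleR_left ip_scaleR_right algebra_simps)
  then have "Re (ip (a + s *\<^sub>R b) (a + s *\<^sub>R b))
      = Re (ip a a) + s * Re (ip a b) + s * Re (ip b a) + s * (s * Re (ip b b))"
    by simp
  then show ?thesis by (simp add: re_ip_self re_ip_commute[of b a] power2_eq_square algebra_simps)
qed

section \<open>Von Neumann algebras\<close>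

lemma bop_bounded_linear: "bop sc T \<Longrightarrow> bounded_linear T"
  by (simp add: bop_def)
lemma bop_sc: "bop sc T \<Longrightarrow> T (sc c x) = sc c (T x)"
  by (simp add: bop_def)
lemma bop_add: "bop sc T \<Longrightarrow> T (x + y) = T x + T y"
  using bop_bounded_linear bounded_linear.linear linear_add by blast
lemma bop_diff: "bop sc T \<Longrightarrow> T (x - y) = T x - T y"
  using bop_bounded_linear bounded_linear.linear linear_diff by blast
lemma bop_scaleR: "bop sc T \<Longrightarrow> T (r *\<^sub>R x) = r *\<^sub>R T x"
  using bop_bounded_linear bounded_linear.linear linear_scale by blast
lemma bop_sum: "bop sc T \<Longrightarrow> T (\<Sum>i\<in>I. f i) = (\<Sum>i\<in>I. T (f i))"
  using bop_bounded_linear bounded_linear.linear linear_sum by blast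

lemma vna_bop: "von_neumann_algebra sc ip M \<Longrightarrow> T \<in> M \<Longrightarrow> bop sc T"
  by (simp add: von_neumann_algebra_def)
lemma vna_id: "von_neumann_algebra sc ip M \<Longrightarrow> (\<lambda>x. x) \<in> M"
  by (simp add: von_neumann_algebra_def id_def)
lemma vna_add:
  "von_neumann_algebra sc ip M \<Longrightarrow> A \<in> M \<Longrightarrow> B \<in> M \<Longrightarrow> (\<lambda>x. A x + B x) \<in> M"
  by (simp add: von_neumann_algebra_def)
lemma vna_comp: "von_neumann_algebra sc ip M \<Longrightarrow> A \<in> M \<Longrightarrow> B \<in> M \<Longrightarrow> (\<lambda>x. A (B x)) \<in> M"
  by (simp add: von_neumann_algebra_def comp_def)
lemma vna_adjoint: "von_neumann_algebra sc ip M \<Longrightarrow> A \<in> M \<Longrightarrow> \<exists>B\<in>M. is_adjoint ip A B"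
  by (simp add: von_neumann_algebra_def)
lemma vna_wot_closed: "von_neumann_algebra sc ip M \<Longrightarrow> wot_closed sc ip M"
  by (simp add: von_neumann_algebra_def)
lemma vna_scaleR: "von_neumann_algebra sc ip M \<Longrightarrow> A \<in> M \<Longrightarrow> (\<lambda>x. r *\<^sub>R A x) \<in> M"
  by (simp add: von_neumann_algebra_def flip: sc_of_real)
lemma vna_minus: "von_neumann_algebra sc ip M \<Longrightarrow> A \<in> M \<Longrightarrow> (\<lambda>x. - A x) \<in> M"
  using vna_scaleR[of M A "-1"] by simp
lemma vna_diff:
  "von_neumann_algebra sc ip M \<Longrightarrow> A \<in> M \<Longrightarrow> B \<in> M \<Longrightarrow> (\<lambda>x. A x - B x) \<in> M"
  using vna_add[of M A "\<lambda>x. - B x"] vna_minus[of M B] by simp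
lemma vna_zero: "von_neumann_algebra sc ip M \<Longrightarrow> (\<lambda>x. 0) \<in> M"
  using vna_scaleR[of M "\<lambda>x. x" 0] vna_id[of M] by simp
lemma vna_sum:
  assumes "von_neumann_algebra sc ip M" and "\<And>i. i < (n::nat) \<Longrightarrow> A i \<in> M"
  shows "(\<lambda>x. \<Sum>i<n. A i x) \<in> M"
  using assms(2) by (induction n) (simp_all add: vna_zero vna_add assms(1))
lemma vna_funpow: "von_neumann_algebra sc ip M \<Longrightarrow> A \<in> M \<Longrightarrow> A ^^ k \<in> M"
  by (induction k) (auto simp: vna_id[unfolded id_def[symmetric]] vna_comp[unfolded comp_def[symmetric]])

lemma wot_closed_strong_limit:
  assumes W: "wot_closed sc ip M" and B: "bop sc B" and X: "\<And>k. X k \<in> M"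
    and lim: "\<And>x. (\<lambda>k. X k x) \<longlonglongrightarrow> B x"
  shows "B \<in> M"
proof -
  have "\<exists>A\<in>M. \<forall>(x, y)\<in>F. cmod (ip (B x) y - ip (A x) y) < e"
    if F: "finite F" and e: "e > 0" for F :: "('a \<times> 'a) set" and e
  proof -
    have "\<forall>\<^sub>F k in sequentially. \<forall>p\<in>F. dist (ip (X k (fst p)) (snd p)) (ip (B (fst p)) (snd p)) < e"
      using F e by (intro eventually_ball_finite ballI tendstoD
          bounded_linear.tendsto[OF bounded_linear_ip_left lim])
    then obtain N where "\<forall>p\<in>F. dist (ip (X N (fst p)) (snd p)) (ip (B (fst p)) (snd p)) < e"
      by (auto simp: eventually_sequentially)
    then show ?thesis
      using X by (intro bexI[of _ "X N"]) (auto simp: dist_norm norm_minus_commute)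
  qed
  then show ?thesis using W B unfolding wot_closed_def by blast
qed

lemma bop_strong_limit:
  assumes X: "\<And>k. bop sc (X k)" and lim: "\<And>x. (\<lambda>k. X k x) \<longlonglongrightarrow> B x"
    and bound: "\<And>k x. norm (X k x) \<le> K * norm x"
  shows "bop sc B"
proof -
  have commute: "B (f x) = f (B x)"
    if "bounded_linear f" and "\<And>k. X k (f x) = f (X k x)" for f x
    using LIMSEQ_unique[OF lim[of "f x"]] bounded_linear.tendsto[OF that(1) lim[of x]] that(2)
    by simp
  have add: "B (x + y) = B x + B y" for x y
    using LIMSEQ_unique[OF lim[of "x + y"]] tendsto_add[OF lim[of x] lim[of y]]
    by (simp add: bop_add[OF X])
  have "bounded_linear B"
  proof (rule bounded_linear_intro[of _ K])
    show "B (r *\<^sub>R x) = r *\<^sub>R B x" for r x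
      by (rule commute) (simp_all add: bop_scaleR[OF X] bounded_linear_scaleR_right)
    show "norm (B x) \<le> norm x * K" for x
      using tendsto_norm[OF lim[of x]] bound by (subst mult.commute, intro LIMSEQ_le_const2) auto
  qed (rule add)
  moreover have "B (sc c x) = sc c (B x)" for c x
    by (rule commute) (simp_all add: bop_sc[OF X] bounded_linear_sc)
  ultimately show ?thesis by (simp add: bop_def)
qed

lemma vna_strong_limit:
  assumes "von_neumann_algebra sc ip M" and "\<And>k. X k \<in> M"
    and "\<And>x. (\<lambda>k. X k x) \<longlonglongrightarrow> B x" and "\<And>k x. norm (X k x) \<le> K * norm x"
  shows "B \<in> M"
  using assms by (intro wot_closed_strong_limit[of M B X] bop_strong_limit[of X B K] vna_wot_closed)
    (auto intro: vna_bop)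

lemma vna_neumann_series:
  assumes M: "von_neumann_algebra sc ip M" and YM: "Y \<in> M"
    and r: "0 \<le> r" "r < 1" and contraction: "\<And>x. norm (Y x) \<le> r * norm x"
  shows "\<exists>D\<in>M. \<forall>y. D y - Y (D y) = y"
proof -
  have Y: "bop sc Y" using vna_bop[OF M YM] .
  have Ypow: "norm ((Y ^^ k) x) \<le> r ^ k * norm x" for k x
  proof (induction k)
    case (Suc k)
    have "norm ((Y ^^ Suc k) x) \<le> r * norm ((Y ^^ k) x)" by (simp add: contraction)
    also have "\<dots> \<le> r * (r ^ k * norm x)" using Suc r by (intro mult_left_mono) auto
    finally show ?case by simp
  qed simp
  have summable: "summable (\<lambda>k. (Y ^^ k) y)" for y
    by (rule summable_comparison_test'[of "\<lambda>k. r ^ k * norm y" 0])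
       (auto intro!: summable_mult2 summable_geometric simp: Ypow r)
  define D where "D = (\<lambda>y. \<Sum>k. (Y ^^ k) y)"
  define X where "X = (\<lambda>N y. \<Sum>k<N. (Y ^^ k) y)"
  have XM: "X N \<in> M" for N unfolding X_def by (intro vna_sum vna_funpow M YM)
  have lim: "(\<lambda>N. X N y) \<longlonglongrightarrow> D y" for y
    unfolding X_def D_def by (rule summable_LIMSEQ[OF summable])
  have bound_X: "norm (X N y) \<le> (1 / (1 - r)) * norm y" for N y
  proof -
    have "(\<Sum>k<N. r ^ k) \<le> (\<Sum>k. r ^ k)"
      by (rule sum_le_suminf) (auto intro!: summable_geometric simp: r)
    then have geom: "(\<Sum>k<N. r ^ k) \<le> 1 / (1 - r)" using suminf_geometric[of r] r by simp
    have "norm (X N y) \<le> (\<Sum>k<N. r ^ k * norm y)"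
      unfolding X_def by (rule order_trans[OF norm_sum sum_mono]) (rule Ypow)
    also have "\<dots> \<le> 1 / (1 - r) * norm y"
      using mult_right_mono[OF geom norm_ge_zero] by (simp add: sum_distrib_right[symmetric])
    finally show ?thesis .
  qed
  have "D y - Y (D y) = y" for y
  proof -
    have "Y (D y) = (\<Sum>k. (Y ^^ Suc k) y)"
      using bounded_linear.suminf[OF bop_bounded_linear[OF Y] summable] by (simp add: D_def)
    also have "\<dots> = D y - y" using suminf_split_head[OF summable[of y]] by (simp add: D_def)
    finally show ?thesis by simp
  qed
  then show ?thesis using vna_strong_limit[OF M XM lim bound_X] by blast
qed

text \<open>\<open>1 - (P + e)/c\<close> is a strict contraction for \<open>c = L + 2e\<close>.\<close>

lemma vna_shift_right_inverse:
  assumes M: "von_neumann_algebra sc ip M" and P: "P \<in> M"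
    and pos: "\<And>x. 0 \<le> Re (ip (P x) x)"
    and bound: "\<And>x. (norm (P x))\<^sup>2 \<le> L * Re (ip (P x) x)" and L: "0 \<le> L" and e: "0 < e"
  shows "\<exists>D\<in>M. \<forall>y. P (D y) + e *\<^sub>R D y = y"
proof -
  define c where "c = L + 2 * e"
  define r where "r = 1 - e / c"
  have c: "c > 0" using L e by (simp add: c_def)
  have r: "0 \<le> r" "r < 1" using L e c by (auto simp: r_def c_def field_simps)
  define Y where "Y = (\<lambda>x. x - (1 / c) *\<^sub>R (P x + e *\<^sub>R x))"
  have YM: "Y \<in> M" unfolding Y_def by (intro vna_diff vna_scaleR vna_add vna_id M P)
  have "norm (Y x) \<le> r * norm x" for x
  proof -
    define p where "p = Re (ip (P x) x)"
    define w where "w = P x + e *\<^sub>R x"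
    have "(norm (Y x))\<^sup>2 = (norm (x + (- (1/c)) *\<^sub>R w))\<^sup>2" by (simp add: Y_def w_def)
    also have "\<dots> = (norm x)\<^sup>2 - 2 * (1/c) * Re (ip x w) + (1/c)\<^sup>2 * (norm w)\<^sup>2"
      unfolding norm_add_scaleR_square by simp
    also have "\<dots> = (norm x)\<^sup>2 - 2 * (1/c) * (p + e * (norm x)\<^sup>2)
        + (1/c)\<^sup>2 * ((norm (P x))\<^sup>2 + 2 * e * p + e\<^sup>2 * (norm x)\<^sup>2)"
      unfolding w_def norm_add_scaleR_square p_def
      by (simp add: ip_add_right ip_scaleR_right re_ip_self re_ip_commute[of x "P x"])
    also have "\<dots> \<le> (norm x)\<^sup>2 - 2 * (1/c) * (p + e * (norm x)\<^sup>2)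
        + (1/c)\<^sup>2 * (L * p + 2 * e * p + e\<^sup>2 * (norm x)\<^sup>2)"
      using bound[of x] by (intro add_left_mono mult_left_mono) (auto simp: p_def)
    also have "\<dots> = r\<^sup>2 * (norm x)\<^sup>2 - p / c"
    proof -
      have "L = c - 2 * e" by (simp add: c_def)
      show ?thesis using c unfolding r_def \<open>L = c - 2 * e\<close> by (simp add: field_simps power2_eq_square)
    qed
    also have "\<dots> \<le> (r * norm x)\<^sup>2" using pos[of x] c by (simp add: p_def power_mult_distrib)
    finally show ?thesis by (rule power2_le_imp_le) (simp add: r)
  qed
  then obtain D where D: "D \<in> M" "\<And>y. D y - Y (D y) = y"
    using vna_neumann_series[OF M YM r] by blast
  have "P ((1 / c) *\<^sub>R D y) + e *\<^sub>R ((1 / c) *\<^sub>R D y) = y" for y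
    using D(2)[of y] c by (simp add: Y_def bop_add[OF vna_bop[OF M P]] bop_scaleR[OF vna_bop[OF M P]]
        algebra_simps)
  then show ?thesis using vna_scaleR[OF M D(1), of "1 / c"] by (intro bexI) auto
qed

end

section \<open>Coefficients of a left combination\<close>

lemma norm_sum_le_sqrt_sum_squares:
  fixes C :: "nat \<Rightarrow> 'a::real_normed_vector \<Rightarrow> 'b::real_normed_vector"
  assumes C: "\<And>i v. i < n \<Longrightarrow> norm (C i v) \<le> norm v * k i" and k: "\<And>i. i < n \<Longrightarrow> 0 \<le> k i"
  shows "norm (\<Sum>i<n. C i (u i)) \<le> (\<Sum>i<n. k i) * sqrt (\<Sum>i<n. (norm (u i))\<^sup>2)"
proof -
  let ?S = "sqrt (\<Sum>i<n. (norm (u i))\<^sup>2)"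
  have u: "norm (u i) \<le> ?S" if "i < n" for i
    using that by (intro real_le_rsqrt member_le_sum) auto
  have "norm (\<Sum>i<n. C i (u i)) \<le> (\<Sum>i<n. norm (u i) * k i)"
    by (rule order_trans[OF norm_sum sum_mono]) (simp add: C)
  also have "\<dots> \<le> (\<Sum>i<n. ?S * k i)" by (intro sum_mono mult_right_mono u k) auto
  finally show ?thesis by (simp add: sum_distrib_right mult.commute)
qed

lemma Cauchy_if_dist_le_sqrt:
  fixes f :: "nat \<Rightarrow> 'a::metric_space"
  assumes a: "Cauchy a" and K: "0 \<le> K"
    and dist: "\<And>m l. dist (f m) (f l) \<le> K * sqrt \<bar>a m - a l\<bar>"
  shows "Cauchy f"
proof (rule metric_CauchyI)
  fix e :: real assume e: "0 < e"
  define eta where "eta = e / (K + 1)"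
  have eta: "0 < eta" and K_eta: "K * eta < e" using e K by (auto simp: eta_def field_simps)
  obtain N where N: "\<forall>m\<ge>N. \<forall>l\<ge>N. dist (a m) (a l) < eta\<^sup>2"
    using metric_CauchyD[OF a, of "eta\<^sup>2"] eta by auto
  have "dist (f m) (f l) < e" if "m \<ge> N" "l \<ge> N" for m l
  proof -
    have "sqrt \<bar>a m - a l\<bar> < eta"
      using real_sqrt_less_mono[of "\<bar>a m - a l\<bar>" "eta\<^sup>2"] N that eta by (simp add: dist_real_def)
    then have "K * sqrt \<bar>a m - a l\<bar> \<le> K * eta" using K by (intro mult_left_mono) auto
    then show ?thesis using dist[of m l] K_eta by linarith
  qed
  then show "\<exists>M. \<forall>m\<ge>M. \<forall>l\<ge>M. dist (f m) (f l) < e" by blast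
qed

locale vna_combination = hilbert +
  fixes M :: "('a::banach \<Rightarrow> 'a) set" and n :: nat and s s' A :: "nat \<Rightarrow> 'a \<Rightarrow> 'a"
  assumes vna: "von_neumann_algebra sc ip M"
    and s_in: "\<And>i. i < n \<Longrightarrow> s i \<in> M" and s'_in: "\<And>i. i < n \<Longrightarrow> s' i \<in> M"
    and adjoint: "\<And>i. i < n \<Longrightarrow> is_adjoint ip (s i) (s' i)"
    and bop_A: "\<And>i. i < n \<Longrightarrow> bop sc (A i)"
    and combination_in: "(\<lambda>x. \<Sum>i<n. A i (s i x)) \<in> M"
begin

definition "T = (\<lambda>x. \<Sum>i<n. A i (s i x))"
definition "P = (\<lambda>x. \<Sum>i<n. s' i (s i x))"
definition "q x = (\<Sum>i<n. (norm (s i x))\<^sup>2)"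

lemma T_in: "T \<in> M" using combination_in by (simp add: T_def)
lemma bop_T: "bop sc T" using vna_bop[OF vna T_in] .
lemma bop_s: "i < n \<Longrightarrow> bop sc (s i)" using vna_bop[OF vna s_in] .
lemma P_in: "P \<in> M" unfolding P_def by (intro vna_sum[OF vna] vna_comp[OF vna s'_in s_in])
lemma bop_P: "bop sc P" using vna_bop[OF vna P_in] .

lemma ip_s: "i < n \<Longrightarrow> ip (s i x) y = ip x (s' i y)"
  using adjoint by (simp add: is_adjoint_def)

lemma ip_s': "i < n \<Longrightarrow> ip (s' i x) y = ip x (s i y)"
  by (subst (1 2) ip_sym) (simp add: ip_s)

lemma ip_P_left: "ip (P x) y = (\<Sum>i<n. ip (s i x) (s i y))"
  unfolding P_def ip_sum_left by (simp add: ip_s')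
lemma ip_P_right: "ip x (P y) = (\<Sum>i<n. ip (s i x) (s i y))"
  by (subst ip_sym) (simp add: ip_P_left cnj_sum flip: ip_sym)
lemma re_ip_P_left: "Re (ip (P x) x) = q x" by (simp add: ip_P_left q_def re_ip_self)
lemma re_ip_P_right: "Re (ip x (P x)) = q x" by (simp add: ip_P_right q_def re_ip_self)

lemma q_nonneg: "0 \<le> q x" unfolding q_def by (intro sum_nonneg) simp
lemma norm_s_le_sqrt_q: "i < n \<Longrightarrow> norm (s i x) \<le> sqrt (q x)"
  unfolding q_def by (intro real_le_rsqrt member_le_sum) auto
lemma q_scaleR: "q (r *\<^sub>R x) = r\<^sup>2 * q x"
  unfolding q_def by (simp add: sum_distrib_left bop_scaleR[OF bop_s] power_mult_distrib)

lemma bounded_by_sqrt_q: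
  assumes "\<And>i. i < n \<Longrightarrow> bounded_linear (C i)"
  obtains K where "K \<ge> 0" and "\<And>x. norm (\<Sum>i<n. C i (s i x)) \<le> K * sqrt (q x)"
proof -
  obtain k where k: "\<And>i. i < n \<Longrightarrow> k i > 0 \<and> (\<forall>v. norm (C i v) \<le> norm v * k i)"
    using bounded_linear.pos_bounded[OF assms]
      choice[of "\<lambda>i k. i < n \<longrightarrow> k > 0 \<and> (\<forall>v. norm (C i v) \<le> norm v * k)"] by blast
  show ?thesis
  proof
    show "0 \<le> (\<Sum>i<n. k i)" using k by (intro sum_nonneg) (simp add: less_imp_le)
    show "norm (\<Sum>i<n. C i (s i x)) \<le> (\<Sum>i<n. k i) * sqrt (q x)" for x
      unfolding q_def by (rule norm_sum_le_sqrt_sum_squares) (use k less_imp_le in auto)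
  qed
qed

lemma norm_P_square_le: obtains L where "L \<ge> 0" and "\<And>x. (norm (P x))\<^sup>2 \<le> L * q x"
proof -
  obtain K where K: "K \<ge> 0" "\<And>x. norm (P x) \<le> K * sqrt (q x)"
    unfolding P_def by (rule bounded_by_sqrt_q[of s', OF bop_bounded_linear[OF vna_bop[OF vna s'_in]]]) auto
  have "(norm (P x))\<^sup>2 \<le> K\<^sup>2 * q x" for x
    using power_mono[OF K(2)[of x] norm_ge_zero, of 2] q_nonneg[of x] by (simp add: power_mult_distrib)
  then show ?thesis using that[of "K\<^sup>2"] by simp
qed

lemma P_shift_inj: assumes e: "e > 0" and eq: "P a + e *\<^sub>R a = P b + e *\<^sub>R b" shows "a = b"
proof -
  have "P (a - b) + e *\<^sub>R (a - b) = 0"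
    using eq by (simp add: bop_diff[OF bop_P] scaleR_diff_right algebra_simps)
  then have "Re (ip (P (a - b) + e *\<^sub>R (a - b)) (a - b)) = 0" by simp
  then have "q (a - b) + e * (norm (a - b))\<^sup>2 = 0"
    by (simp add: ip_add_left ip_scaleR_left re_ip_P_left re_ip_self)
  moreover have "0 \<le> e * (norm (a - b))\<^sup>2" using e by simp
  ultimately have "e * (norm (a - b))\<^sup>2 = 0" using q_nonneg[of "a - b"] by linarith
  then show ?thesis using e by simp
qed

lemma re_ip_P_shift: "Re (ip z (P z + e *\<^sub>R z)) = q z + e * (norm z)\<^sup>2"
  by (simp add: ip_add_right ip_scaleR_right re_ip_P_right re_ip_self)

definition "eps k = inverse (real (Suc k))"

definition "resolvent k = (SOME D. D \<in> M \<and> (\<forall>y. P (D y) + eps k *\<^sub>R D y = y))"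

lemma eps_pos: "eps k > 0" by (simp add: eps_def)
lemma eps_antimono: "j \<le> k \<Longrightarrow> eps k \<le> eps j" unfolding eps_def by (rule le_imp_inverse_le) auto
lemma eps_tendsto_0: "eps \<longlonglongrightarrow> 0"
  unfolding eps_def by (rule LIMSEQ_inverse_real_of_nat)

lemma resolvent_spec: "resolvent k \<in> M \<and> (\<forall>y. P (resolvent k y) + eps k *\<^sub>R resolvent k y = y)"
proof -
  obtain L where L: "L \<ge> 0" "\<And>x. (norm (P x))\<^sup>2 \<le> L * q x" using norm_P_square_le by blast
  have "\<exists>D\<in>M. \<forall>y. P (D y) + eps k *\<^sub>R D y = y"
    by (rule vna_shift_right_inverse[OF vna P_in _ _ L(1) eps_pos])
      (simp_all add: re_ip_P_left q_nonneg L(2))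
  then have "\<exists>D. D \<in> M \<and> (\<forall>y. P (D y) + eps k *\<^sub>R D y = y)" by blast
  then show ?thesis unfolding resolvent_def by (rule someI_ex)
qed
lemma resolvent_in: "resolvent k \<in> M" using resolvent_spec by blast
lemma bop_resolvent: "bop sc (resolvent k)" using vna_bop[OF vna resolvent_in] .
lemma P_resolvent: "P (resolvent k y) + eps k *\<^sub>R resolvent k y = y" using resolvent_spec by blast
lemma resolvent_P: "resolvent k (P v + eps k *\<^sub>R v) = v"
  by (rule P_shift_inj[OF eps_pos[of k]]) (simp add: P_resolvent)

definition "KT = (SOME K. K \<ge> 0 \<and> (\<forall>x. norm (T x) \<le> K * sqrt (q x)))"

lemma KT_spec: "KT \<ge> 0 \<and> (\<forall>x. norm (T x) \<le> KT * sqrt (q x))"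
proof -
  obtain K where "K \<ge> 0" "\<And>x. norm (T x) \<le> K * sqrt (q x)"
    unfolding T_def by (rule bounded_by_sqrt_q[of A, OF bop_bounded_linear[OF bop_A]]) auto
  then have "\<exists>K. K \<ge> 0 \<and> (\<forall>x. norm (T x) \<le> K * sqrt (q x))" by blast
  then show ?thesis unfolding KT_def by (rule someI_ex)
qed
lemma KT_nonneg: "KT \<ge> 0" using KT_spec by blast
lemma norm_T_le: "norm (T x) \<le> KT * sqrt (q x)" using KT_spec by blast

definition "resolvent_form w k = Re (ip (resolvent k w) w)"

lemma resolvent_form_eq: "resolvent_form w k = q (resolvent k w) + eps k * (norm (resolvent k w))\<^sup>2"
proof -
  have "resolvent_form w k = Re (ip (resolvent k w) (P (resolvent k w) + eps k *\<^sub>R resolvent k w))" by (simp add: resolvent_form_def P_resolvent)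
  also have "\<dots> = q (resolvent k w) + eps k * (norm (resolvent k w))\<^sup>2" by (rule re_ip_P_shift)
  finally show ?thesis .
qed
lemma resolvent_form_nonneg: "0 \<le> resolvent_form w k"
  unfolding resolvent_form_eq using q_nonneg eps_pos by (simp add: add_nonneg_nonneg less_imp_le)

lemma resolvent_diff:
  "resolvent k w - resolvent j w = (eps j - eps k) *\<^sub>R resolvent k (resolvent j w)"
proof -
  define z where "z = resolvent k (resolvent j w)"
  have z: "P z + eps k *\<^sub>R z = resolvent j w" by (simp add: z_def P_resolvent)
  have "P (P z + eps j *\<^sub>R z) + eps k *\<^sub>R (P z + eps j *\<^sub>R z)
      = P (P z + eps k *\<^sub>R z) + eps j *\<^sub>R (P z + eps k *\<^sub>R z)"
    by (simp add: bop_add[OF bop_P] bop_scaleR[OF bop_P] algebra_simps)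
  also have "\<dots> = w" by (simp add: z P_resolvent)
  finally have "resolvent k w = P z + eps j *\<^sub>R z" by (metis resolvent_P)
  then have "resolvent k w - resolvent j w = (eps j - eps k) *\<^sub>R z"
    by (simp add: scaleR_diff_left flip: z)
  then show ?thesis by (simp add: z_def)
qed

lemma q_resolvent_diff_le:
  assumes "j \<le> k"
  shows "q (resolvent k w - resolvent j w) \<le> resolvent_form w k - resolvent_form w j"
proof -
  define d e where "d = eps k" and "e = eps j"
  have d: "0 < d" and de: "d \<le> e" using eps_pos eps_antimono[OF assms] by (simp_all add: d_def e_def)
  define z where "z = resolvent k (resolvent j w)"
  have diff: "resolvent k w - resolvent j w = (e - d) *\<^sub>R z"
    by (simp add: resolvent_diff d_def e_def z_def)
  have "w = P (P z + d *\<^sub>R z) + e *\<^sub>R (P z + d *\<^sub>R z)" by (simp add: z_def d_def e_def P_resolvent)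
  then have w: "w = P (P z) + (e + d) *\<^sub>R P z + (e * d) *\<^sub>R z"
    by (simp add: bop_add[OF bop_P] bop_scaleR[OF bop_P] algebra_simps)
  have "ip z (P (P z)) = ip (P z) (P z)" by (simp only: ip_P_right[of z "P z"] ip_P_left[of z "P z", symmetric])
  then have z_w: "Re (ip z w) = (norm (P z))\<^sup>2 + (e + d) * q z + (e * d) * (norm z)\<^sup>2"
    by (subst w) (simp add: ip_add_right ip_scaleR_right re_ip_self re_ip_P_right)
  have "resolvent_form w k - resolvent_form w j = Re (ip (resolvent k w - resolvent j w) w)"
    by (simp add: resolvent_form_def ip_diff_left)
  then have form: "resolvent_form w k - resolvent_form w j
      = (e - d) * ((norm (P z))\<^sup>2 + (e + d) * q z + (e * d) * (norm z)\<^sup>2)"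
    by (simp add: diff ip_scaleR_left z_w)
  have "(e - d) * q z \<le> (norm (P z))\<^sup>2 + (e + d) * q z + (e * d) * (norm z)\<^sup>2"
    using d de q_nonneg[of z] by (smt (verit) mult_right_mono zero_le_mult_iff zero_le_power2)
  then have "(e - d) * ((e - d) * q z) \<le> resolvent_form w k - resolvent_form w j"
    unfolding form using de by (intro mult_left_mono) auto
  then show ?thesis by (simp add: diff q_scaleR power2_eq_square)
qed

lemma resolvent_form_mono: "j \<le> k \<Longrightarrow> resolvent_form w j \<le> resolvent_form w k"
  using q_resolvent_diff_le[of j k w] q_nonneg[of "resolvent k w - resolvent j w"] by linarith

lemma norm_T_resolvent_diff_le:
  "norm (T (resolvent m w) - T (resolvent l w)) \<le> KT * sqrt \<bar>resolvent_form w m - resolvent_form w l\<bar>"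
proof -
  have "norm (T (resolvent m w) - T (resolvent l w)) \<le> KT * sqrt \<bar>resolvent_form w m - resolvent_form w l\<bar>"
    if "l \<le> m" for l m
  proof -
    have "norm (T (resolvent m w) - T (resolvent l w)) \<le> KT * sqrt (q (resolvent m w - resolvent l w))"
      using norm_T_le[of "resolvent m w - resolvent l w"] by (simp add: bop_diff[OF bop_T])
    also have "\<dots> \<le> KT * sqrt \<bar>resolvent_form w m - resolvent_form w l\<bar>"
      using q_resolvent_diff_le[OF that, of w] KT_nonneg by (intro mult_left_mono real_sqrt_le_mono) auto
    finally show ?thesis .
  qed
  from this[of l m] this[of m l] show ?thesis
    by (cases "l \<le> m") (auto simp: norm_minus_commute abs_minus_commute)
qed

lemma Cauchy_T_resolvent:
  assumes bound: "\<And>k. resolvent_form w k \<le> C"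
  shows "Cauchy (\<lambda>k. T (resolvent k w))"
proof (rule Cauchy_if_dist_le_sqrt[OF _ KT_nonneg])
  have "Bseq (resolvent_form w)"
    using bound resolvent_form_nonneg by (intro BseqI'[of _ C]) (simp add: abs_of_nonneg)
  then show "Cauchy (resolvent_form w)"
    using resolvent_form_mono by (intro convergent_Cauchy Bseq_mono_convergent) auto
  show "dist (T (resolvent m w)) (T (resolvent l w))
      \<le> KT * sqrt \<bar>resolvent_form w m - resolvent_form w l\<bar>" for m l
    using norm_T_resolvent_diff_le by (simp add: dist_norm)
qed

lemma adjoint_resolvent_bounds:
  assumes i: "i < n"
  shows "q (resolvent k (s' i y)) \<le> (norm y)\<^sup>2 \<and> resolvent_form (s' i y) k \<le> (norm y)\<^sup>2"
proof -
  define w where "w = s' i y"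
  define z where "z = resolvent k w"
  define t where "t = sqrt (q z)"
  have t0: "0 \<le> t" using q_nonneg[of z] by (simp add: t_def)
  have tq: "t\<^sup>2 = q z" using q_nonneg[of z] by (simp add: t_def)
  have A1: "resolvent_form w k = q z + eps k * (norm z)\<^sup>2" by (simp add: resolvent_form_eq z_def)
  have "resolvent_form w k = Re (ip (s i z) y)" by (simp add: resolvent_form_def z_def w_def ip_s[OF i])
  also have "\<dots> \<le> cmod (ip (s i z) y)" by (rule complex_Re_le_cmod)
  also have "\<dots> \<le> norm (s i z) * norm y" by (rule cauchy_schwarz)
  also have "\<dots> \<le> t * norm y" unfolding t_def by (intro mult_right_mono norm_s_le_sqrt_q i) simp
  finally have A2: "resolvent_form w k \<le> t * norm y" .
  have "0 \<le> eps k * (norm z)\<^sup>2" using eps_pos[of k] by simp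
  then have tt: "t\<^sup>2 \<le> t * norm y" using A1 A2 tq by linarith
  have ty: "t \<le> norm y" using tt t0 by (cases "t = 0") (auto simp: power2_eq_square)
  have "q z \<le> (norm y)\<^sup>2" unfolding tq[symmetric] using ty t0 by (intro power_mono) auto
  moreover have "resolvent_form w k \<le> (norm y)\<^sup>2"
  proof -
    have "t * norm y \<le> norm y * norm y" using ty by (intro mult_right_mono) auto
    then show ?thesis using A2 by (simp add: power2_eq_square)
  qed
  ultimately show ?thesis by (simp add: z_def w_def)
qed

definition "approx_coefficient i k = (\<lambda>y. T (resolvent k (s' i y)))"
definition "coefficient i = (\<lambda>y. lim (\<lambda>k. approx_coefficient i k y))"

lemma approx_coefficient_in: "i < n \<Longrightarrow> approx_coefficient i k \<in> M"
  unfolding approx_coefficient_def by (rule vna_comp[OF vna T_in vna_comp[OF vna resolvent_in s'_in]])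

lemma approx_coefficient_tendsto: "i < n \<Longrightarrow> (\<lambda>k. approx_coefficient i k y) \<longlonglongrightarrow> coefficient i y"
proof -
  assume i: "i < n"
  have "Cauchy (\<lambda>k. T (resolvent k (s' i y)))"
    by (rule Cauchy_T_resolvent[of _ "(norm y)\<^sup>2"]) (use adjoint_resolvent_bounds[OF i] in blast)
  then have "convergent (\<lambda>k. approx_coefficient i k y)" by (simp add: approx_coefficient_def Cauchy_convergent_iff)
  then show ?thesis unfolding coefficient_def by (simp add: convergent_LIMSEQ_iff)
qed

lemma norm_approx_coefficient_le: "i < n \<Longrightarrow> norm (approx_coefficient i k y) \<le> KT * norm y"
proof -
  assume i: "i < n"
  have "norm (approx_coefficient i k y) \<le> KT * sqrt (q (resolvent k (s' i y)))" unfolding approx_coefficient_def by (rule norm_T_le)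
  also have "\<dots> \<le> KT * sqrt ((norm y)\<^sup>2)"
    using adjoint_resolvent_bounds[OF i, of k y] KT_nonneg by (intro mult_left_mono real_sqrt_le_mono) auto
  finally show ?thesis by simp
qed

lemma coefficient_in: "i < n \<Longrightarrow> coefficient i \<in> M"
  by (rule vna_strong_limit[OF vna approx_coefficient_in approx_coefficient_tendsto norm_approx_coefficient_le])

text \<open>From \<open>q z + eps k \<parallel>z\<parallel>\<^sup>2 = Re \<langle>z, x\<rangle> \<le> \<parallel>z\<parallel> \<parallel>x\<parallel>\<close> for \<open>z = resolvent k x\<close> one gets
  \<open>4 eps k q z \<le> \<parallel>x\<parallel>\<^sup>2\<close> by completing the square.\<close>

lemma norm_eps_T_resolvent_le: "norm (eps k *\<^sub>R T (resolvent k x)) \<le> KT * (sqrt (eps k) * norm x)"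
proof -
  define d where "d = eps k"
  define z where "z = resolvent k x"
  have d0: "0 < d" by (simp add: d_def eps_pos)
  have "q z + d * (norm z)\<^sup>2 = Re (ip z x)"
    using re_ip_P_shift[of z d] P_resolvent[of k x] by (simp add: z_def d_def)
  also have "\<dots> \<le> norm z * norm x"
    using cauchy_schwarz[of z x] complex_Re_le_cmod[of "ip z x"] by linarith
  finally have h: "q z + d * (norm z)\<^sup>2 \<le> norm z * norm x" .
  have "4 * d * (norm z * norm x - d * (norm z)\<^sup>2) \<le> (norm x)\<^sup>2"
  proof -
    have "0 \<le> (norm x - 2 * d * norm z)\<^sup>2" by simp
    then show ?thesis by (simp add: power2_eq_square algebra_simps)
  qed
  moreover have "4 * d * q z \<le> 4 * d * (norm z * norm x - d * (norm z)\<^sup>2)"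
    using h d0 by (intro mult_left_mono) auto
  ultimately have "4 * d * q z \<le> (norm x)\<^sup>2" by linarith
  moreover have "0 \<le> d * q z" using d0 q_nonneg[of z] by simp
  ultimately have "d * q z \<le> (norm x)\<^sup>2" by linarith
  then have dq: "d * (d * q z) \<le> d * (norm x)\<^sup>2" using d0 by (intro mult_left_mono) auto
  have "d * sqrt (q z) = sqrt (d * (d * q z))" using d0 q_nonneg[of z]
    by (simp add: real_sqrt_mult)
  also have "\<dots> \<le> sqrt (d * (norm x)\<^sup>2)" using dq by (rule real_sqrt_le_mono)
  also have "\<dots> = sqrt d * norm x" by (simp add: real_sqrt_mult)
  finally have ds: "d * sqrt (q z) \<le> sqrt d * norm x" .
  have "norm (d *\<^sub>R T z) = d * norm (T z)" using d0 by simp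
  also have "\<dots> \<le> d * (KT * sqrt (q z))" using d0 norm_T_le[of z] by (intro mult_left_mono) auto
  also have "\<dots> = KT * (d * sqrt (q z))" by simp
  also have "\<dots> \<le> KT * (sqrt d * norm x)" using ds KT_nonneg by (intro mult_left_mono)
  finally show ?thesis by (simp add: d_def z_def)
qed

lemma resolvent_of_P: "resolvent k (P x) = x - eps k *\<^sub>R resolvent k x"
proof -
  have "P (x - eps k *\<^sub>R resolvent k x) + eps k *\<^sub>R (x - eps k *\<^sub>R resolvent k x)
      = P x + eps k *\<^sub>R x - eps k *\<^sub>R (P (resolvent k x) + eps k *\<^sub>R resolvent k x)"
    by (simp add: bop_diff[OF bop_P] bop_scaleR[OF bop_P] algebra_simps)
  also have "\<dots> = P x" by (simp add: P_resolvent)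
  finally show ?thesis by (metis resolvent_P)
qed

lemma eps_T_resolvent_tendsto_0: "(\<lambda>k. eps k *\<^sub>R T (resolvent k x)) \<longlonglongrightarrow> 0"
proof (rule Lim_null_comparison)
  show "\<forall>\<^sub>F k in sequentially. norm (eps k *\<^sub>R T (resolvent k x)) \<le> KT * (sqrt (eps k) * norm x)"
    using norm_eps_T_resolvent_le by simp
  have "(\<lambda>k. KT * (sqrt (eps k) * norm x)) \<longlonglongrightarrow> KT * (sqrt 0 * norm x)"
    by (intro tendsto_mult tendsto_const tendsto_real_sqrt eps_tendsto_0)
  then show "(\<lambda>k. KT * (sqrt (eps k) * norm x)) \<longlonglongrightarrow> 0" by simp
qed

lemma T_eq_sum_coefficient: "T = (\<lambda>x. \<Sum>i<n. coefficient i (s i x))"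
proof
  fix x
  have "(\<Sum>i<n. approx_coefficient i k (s i x)) = T (resolvent k (P x))" for k
    by (simp add: approx_coefficient_def P_def bop_sum[OF bop_resolvent] bop_sum[OF bop_T])
  then have "(\<Sum>i<n. approx_coefficient i k (s i x)) = T x - eps k *\<^sub>R T (resolvent k x)" for k
    by (simp add: resolvent_of_P bop_diff[OF bop_T] bop_scaleR[OF bop_T])
  then have "(\<lambda>k. \<Sum>i<n. approx_coefficient i k (s i x)) \<longlonglongrightarrow> T x"
    using tendsto_diff[OF tendsto_const eps_T_resolvent_tendsto_0, of "T x" x] by simp
  moreover have "(\<lambda>k. \<Sum>i<n. approx_coefficient i k (s i x)) \<longlonglongrightarrow> (\<Sum>i<n. coefficient i (s i x))"
    by (rule tendsto_sum) (simp add: approx_coefficient_tendsto)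
  ultimately show "T x = (\<Sum>i<n. coefficient i (s i x))" by (rule LIMSEQ_unique)
qed

end

lemma (in hilbert) vna_left_combination_coefficients:
  assumes M: "von_neumann_algebra sc ip M" and s: "\<And>i. i < (n::nat) \<Longrightarrow> s i \<in> M"
    and A: "\<And>i. i < n \<Longrightarrow> bop sc (A i)" and T: "(\<lambda>x. \<Sum>i<n. A i (s i x)) \<in> M"
  obtains B where "\<And>i. i < n \<Longrightarrow> B i \<in> M"
    and "(\<lambda>x. \<Sum>i<n. A i (s i x)) = (\<lambda>x. \<Sum>i<n. B i (s i x))"
proof -
  obtain s' where s': "\<And>i. i < n \<Longrightarrow> s' i \<in> M \<and> is_adjoint ip (s i) (s' i)"
    using vna_adjoint[OF M s]
      choice[of "\<lambda>i B. i < n \<longrightarrow> B \<in> M \<and> is_adjoint ip (s i) B"] by blast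
  interpret vna_combination sc ip M n s s' A
    by unfold_locales (simp_all add: hilbert_space M s s' A T)
  show ?thesis by (rule that[of coefficient, OF coefficient_in T_eq_sum_coefficient[unfolded T_def]])
qed

section \<open>Generated left ideals\<close>

definition left_combinations :: "('a::banach \<Rightarrow> 'a) set \<Rightarrow> ('a \<Rightarrow> 'a) set \<Rightarrow> ('a \<Rightarrow> 'a) set" where
  "left_combinations R S =
     {T. \<exists>(n::nat) A s. (\<forall>i<n. A i \<in> R \<and> s i \<in> S) \<and> T = (\<lambda>x. \<Sum>i<n. A i (s i x))}"

lemma left_combinationsI:
  "(\<And>i. i < n \<Longrightarrow> A i \<in> R \<and> s i \<in> S) \<Longrightarrow> (\<lambda>x. \<Sum>i<(n::nat). A i (s i x)) \<in> left_combinations R S"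
  unfolding left_combinations_def by blast

lemma left_combinationsE:
  assumes "T \<in> left_combinations R S"
  obtains n :: nat and A s where "\<And>i. i < n \<Longrightarrow> A i \<in> R \<and> s i \<in> S"
    and "T = (\<lambda>x. \<Sum>i<n. A i (s i x))"
  using assms unfolding left_combinations_def by blast

lemma left_combinations_mono: "R \<subseteq> R' \<Longrightarrow> left_combinations R S \<subseteq> left_combinations R' S"
  unfolding left_combinations_def by blast

lemma left_combinations_add_term:
  assumes T: "T \<in> left_combinations R S" and "A \<in> R" and "s \<in> S"
  shows "(\<lambda>x. A (s x) + T x) \<in> left_combinations R S"
proof -
  obtain n :: nat and As ss where h: "\<And>i. i < n \<Longrightarrow> As i \<in> R \<and> ss i \<in> S"
    and T_eq: "T = (\<lambda>x. \<Sum>i<n. As i (ss i x))"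
    using T by (blast elim: left_combinationsE)
  have "(\<lambda>x. \<Sum>i<Suc n. (As(n := A)) i ((ss(n := s)) i (x))) \<in> left_combinations R S"
    using h assms by (intro left_combinationsI) (auto simp: less_Suc_eq)
  moreover have "(\<Sum>i<n. (As(n := A)) i ((ss(n := s)) i x)) = T x" for x
    unfolding T_eq by (intro sum.cong) auto
  ultimately show ?thesis by (simp add: add.commute)
qed

lemma left_combinations_add:
  assumes "T \<in> left_combinations R S" and U: "U \<in> left_combinations R S"
  shows "(\<lambda>x. T x + U x) \<in> left_combinations R S"
proof -
  obtain n :: nat and A s where h: "\<And>i. i < n \<Longrightarrow> A i \<in> R \<and> s i \<in> S"
    and T_eq: "T = (\<lambda>x. \<Sum>i<n. A i (s i x))"
    using assms(1) by (blast elim: left_combinationsE)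
  have "(\<lambda>x. (\<Sum>i<m. A i (s i x)) + U x) \<in> left_combinations R S" if "m \<le> n" for m
    using that
  proof (induction m)
    case 0
    then show ?case using U by simp
  next
    case (Suc m)
    then have "(\<lambda>x. A m (s m x) + ((\<Sum>i<m. A i (s i x)) + U x)) \<in> left_combinations R S"
      using h[of m] by (intro left_combinations_add_term[where A = "A m" and s = "s m"]) auto
    then show ?case by (simp add: add.assoc add.commute add.left_commute)
  qed
  then show ?thesis unfolding T_eq by blast
qed

context hilbert
begin

lemma left_combinations_subset:
  assumes R: "von_neumann_algebra sc ip R" and "S \<subseteq> R"
  shows "left_combinations R S \<subseteq> R"
proof
  fix T assume "T \<in> left_combinations R S"
  then obtain n :: nat and A s where h: "\<And>i. i < n \<Longrightarrow> A i \<in> R \<and> s i \<in> S"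
    and T_eq: "T = (\<lambda>x. \<Sum>i<n. A i (s i x))"
    by (blast elim: left_combinationsE)
  have "(\<lambda>x. A i (s i x)) \<in> R" if "i < n" for i
    using h[OF that] assms(2) by (intro vna_comp[OF R, of "A i" "s i"]) auto
  then show "T \<in> R" unfolding T_eq by (rule vna_sum[OF R])
qed

lemma left_ideal_left_combinations:
  assumes R: "von_neumann_algebra sc ip R" and SR: "S \<subseteq> R"
  shows "left_ideal R (left_combinations R S)"
  unfolding left_ideal_def
proof (intro conjI ballI)
  show "left_combinations R S \<subseteq> R" using left_combinations_subset[OF assms] .
  show "(\<lambda>x. 0) \<in> left_combinations R S"
    using left_combinationsI[of 0] by simp
  show "(\<lambda>x. A x + B x) \<in> left_combinations R S"
    if "A \<in> left_combinations R S" "B \<in> left_combinations R S" for A B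
    using left_combinations_add that .
  show "(\<lambda>x. - A x) \<in> left_combinations R S" if A: "A \<in> left_combinations R S" for A
  proof -
    obtain n :: nat and As s where "\<And>i. i < n \<Longrightarrow> As i \<in> R \<and> s i \<in> S" and "A = (\<lambda>x. \<Sum>i<n. As i (s i x))"
      using A by (blast elim: left_combinationsE)
    then show ?thesis
      using left_combinationsI[of n "\<lambda>i y. - As i y" R s S] vna_minus[OF R] by (simp add: sum_negf)
  qed
  show "C \<circ> A \<in> left_combinations R S" if C: "C \<in> R" and A: "A \<in> left_combinations R S" for C A
  proof -
    obtain n :: nat and As s where "\<And>i. i < n \<Longrightarrow> As i \<in> R \<and> s i \<in> S" and "A = (\<lambda>x. \<Sum>i<n. As i (s i x))"
      using A by (blast elim: left_combinationsE)
    then show ?thesis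
      using left_combinationsI[of n "\<lambda>i y. C (As i y)" R s S] vna_comp[OF R C]
      by (simp add: comp_def bop_sum[OF vna_bop[OF R C]])
  qed
qed

lemma gen_left_ideal_eq_left_combinations:
  assumes R: "von_neumann_algebra sc ip R" and SR: "S \<subseteq> R"
  shows "gen_left_ideal R S = left_combinations R S"
proof
  have "S \<subseteq> left_combinations R S"
  proof
    fix t assume "t \<in> S"
    then show "t \<in> left_combinations R S"
      using left_combinationsI[of 1 "\<lambda>_ x. x" R "\<lambda>_. t" S] vna_id[OF R] by simp
  qed
  then show "gen_left_ideal R S \<subseteq> left_combinations R S"
    unfolding gen_left_ideal_def using left_ideal_left_combinations[OF assms] by blast
  show "left_combinations R S \<subseteq> gen_left_ideal R S"
    unfolding gen_left_ideal_def
  proof (intro Inter_greatest subsetI, elim CollectE conjE)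
    fix T J assume J: "left_ideal R J" "S \<subseteq> J" and "T \<in> left_combinations R S"
    then obtain n :: nat and A s where h: "\<And>i. i < n \<Longrightarrow> A i \<in> R \<and> s i \<in> S"
      and "T = (\<lambda>x. \<Sum>i<n. A i (s i x))" by (blast elim: left_combinationsE)
    have "(\<lambda>x. \<Sum>i<m. A i (s i x)) \<in> J" if "m \<le> n" for m
      using that
    proof (induction m)
      case (Suc m)
      then have "A m \<circ> s m \<in> J" "(\<lambda>x. \<Sum>i<m. A i (s i x)) \<in> J"
        using J h[of m] unfolding left_ideal_def by auto
      then show ?case using J unfolding left_ideal_def comp_def by (simp add: add.commute)
    qed (use J in \<open>simp add: left_ideal_def\<close>)
    then show "T \<in> J" using \<open>T = _\<close> by blast
  qed
qed

lemma is_adjoint_unique: "is_adjoint ip A B1 \<Longrightarrow> is_adjoint ip A B2 \<Longrightarrow> B1 = B2"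
proof
  fix y assume "is_adjoint ip A B1" and "is_adjoint ip A B2"
  then have "ip z (B1 y) = ip z (B2 y)" for z by (simp add: is_adjoint_def)
  then show "B1 y = B2 y" by (intro ip_eqI) (metis ip_sym)
qed

lemma wot_closed_Int:
  assumes "wot_closed sc ip R1" and "wot_closed sc ip R2"
  shows "wot_closed sc ip (R1 \<inter> R2)"
  unfolding wot_closed_def
proof (intro allI impI, elim conjE)
  fix T assume T: "bop sc T" and approx: "\<forall>F :: ('a \<times> 'a) set. finite F \<longrightarrow>
      (\<forall>e>0. \<exists>A\<in>R1 \<inter> R2. \<forall>(x, y)\<in>F. cmod (ip (T x) y - ip (A x) y) < e)"
  have "T \<in> R" if R: "wot_closed sc ip R" and sub: "R1 \<inter> R2 \<subseteq> R" for R
  proof (rule R[unfolded wot_closed_def, rule_format, OF conjI[OF T]], intro allI impI)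
    fix F :: "('a \<times> 'a) set" and e :: real assume "finite F" "0 < e"
    then obtain A where "A \<in> R1 \<inter> R2" "\<forall>(x, y)\<in>F. cmod (ip (T x) y - ip (A x) y) < e"
      using approx by blast
    then show "\<exists>A\<in>R. \<forall>(x, y)\<in>F. cmod (ip (T x) y - ip (A x) y) < e" using sub by blast
  qed
  then show "T \<in> R1 \<inter> R2" using assms by blast
qed

lemma vna_Int:
  assumes R1: "von_neumann_algebra sc ip R1" and R2: "von_neumann_algebra sc ip R2"
  shows "von_neumann_algebra sc ip (R1 \<inter> R2)"
  unfolding von_neumann_algebra_def
proof (intro conjI ballI allI)
  show "\<exists>B\<in>R1 \<inter> R2. is_adjoint ip A B" if A: "A \<in> R1 \<inter> R2" for A
  proof -
    obtain B1 where B1: "B1 \<in> R1" "is_adjoint ip A B1" using vna_adjoint[OF R1] A by blast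
    obtain B2 where B2: "B2 \<in> R2" "is_adjoint ip A B2" using vna_adjoint[OF R2] A by blast
    show ?thesis using B1 B2 is_adjoint_unique[OF B1(2) B2(2)] by blast
  qed
  show "wot_closed sc ip (R1 \<inter> R2)"
    using wot_closed_Int[OF vna_wot_closed[OF R1] vna_wot_closed[OF R2]] .
qed (use R1 R2 in \<open>auto simp: von_neumann_algebra_def\<close>)

lemma left_combinations_Int:
  assumes R1: "von_neumann_algebra sc ip R1" and R2: "von_neumann_algebra sc ip R2"
    and S: "S \<subseteq> R1 \<inter> R2"
  shows "left_combinations R1 S \<inter> R2 = left_combinations (R1 \<inter> R2) S"
proof
  have R: "von_neumann_algebra sc ip (R1 \<inter> R2)" using vna_Int[OF R1 R2] .
  show "left_combinations (R1 \<inter> R2) S \<subseteq> left_combinations R1 S \<inter> R2"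
    using left_combinations_mono[of "R1 \<inter> R2" R1 S] left_combinations_subset[OF R S] by blast
  show "left_combinations R1 S \<inter> R2 \<subseteq> left_combinations (R1 \<inter> R2) S"
  proof
    fix T assume T: "T \<in> left_combinations R1 S \<inter> R2"
    then obtain n :: nat and A s where h: "\<And>i. i < n \<Longrightarrow> A i \<in> R1 \<and> s i \<in> S"
      and T_eq: "T = (\<lambda>x. \<Sum>i<n. A i (s i x))" by (blast elim: left_combinationsE)
    have "T \<in> R1 \<inter> R2" using T left_combinations_subset[OF R1] S by blast
    then obtain B where "\<And>i. i < n \<Longrightarrow> B i \<in> R1 \<inter> R2" and "T = (\<lambda>x. \<Sum>i<n. B i (s i x))"
      using vna_left_combination_coefficients[OF R, of n s A] h S vna_bop[OF R1]
      unfolding T_eq by blast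
    then show "T \<in> left_combinations (R1 \<inter> R2) S" using h by (auto intro: left_combinationsI)
  qed
qed

end

theorem corollary3p10:
  fixes sc :: "complex \<Rightarrow> 'a::banach \<Rightarrow> 'a" and ip :: "'a \<Rightarrow> 'a \<Rightarrow> complex"
    and R1 R2 S :: "('a \<Rightarrow> 'a) set"
  assumes "hilbert_space sc ip"
    and "von_neumann_algebra sc ip R1"
    and "von_neumann_algebra sc ip R2"
    and "S \<subseteq> R1 \<inter> R2"
  shows "gen_left_ideal R1 S \<inter> R2 = gen_left_ideal (R1 \<inter> R2) S"
proof -
  interpret hilbert sc ip by (rule hilbert.intro) (rule assms(1))
  have "gen_left_ideal R1 S = left_combinations R1 S"
    using gen_left_ideal_eq_left_combinations assms(2,4) by blast
  moreover have "gen_left_ideal (R1 \<inter> R2) S = left_combinations (R1 \<inter> R2) S"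
    using gen_left_ideal_eq_left_combinations[OF vna_Int[OF assms(2,3)] assms(4)] .
  ultimately show ?thesis using left_combinations_Int[OF assms(2-4)] by simp
qed

end
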